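(* Let $E$ be a countable set, $\mathcal{C}=\langle E,X\rangle$ a rooted configuration structure and $x^\dagger\in X$ a finite configuration. For all finite $y,z\in X$, we have $y\odot\mathcal{C}[x^\dagger]=z\odot\mathcal{C}[x^\dagger]$ if and only if $y=z$.
   Context: A configuration structure over $E$ is a pair $\mathcal{C}=\langle E,X\rangle$ with $X\subseteq\mathcal{P}(E)$ (its configurations); rooted means $\emptyset\in X$. For finite $y\in X$ the symmetric residual is $y\odot\mathcal{C}:=\langle E,\{w\mathbin{\triangle}y\mid w\in X\}\rangle$, $\mathbin{\triangle}$ being symmetric difference. A pointed configuration structure $\mathcal{C}[x^\dagger]$ is a pair $\langle\mathcal{C},x^\dagger\rangle$ with $x^\dagger$ a finite configuration of $\mathcal{C}$ (its referential); two pointed structures are equal when both components are equal. For finite $y\in X$, $y\odot\mathcal{C}[x^\dagger]:=(y\odot\mathcal{C})[y\mathbin{\triangle}x^\dagger]$. *)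

theory Defs
  imports Main "HOL-Library.Countable_Set"
begin

type_synonym 'e conf_struct = "'e set \<times> 'e set set"

definition conf_struct :: "'e conf_struct \<Rightarrow> bool" where
  "conf_struct C \<longleftrightarrow> snd C \<subseteq> Pow (fst C)"

definition rooted :: "'e conf_struct \<Rightarrow> bool" where
  "rooted C \<longleftrightarrow> {} \<in> snd C"

definition sym_residual :: "'e set \<Rightarrow> 'e conf_struct \<Rightarrow> 'e conf_struct" where
  "sym_residual y C = (fst C, {w - y \<union> (y - w) | w. w \<in> snd C})"

text \<open>Pointed configuration structures C[x]: pair of a structure and a referential.\<close>
type_synonym 'e pointed_cs = "'e conf_struct \<times> 'e set"

definition pointed :: "'e pointed_cs \<Rightarrow> bool" where
  "pointed P \<longleftrightarrow> conf_struct (fst P) \<and> snd P \<in> snd (fst P) \<and> finite (snd P)"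

definition sym_residual_pointed :: "'e set \<Rightarrow> 'e pointed_cs \<Rightarrow> 'e pointed_cs" where
  "sym_residual_pointed y P = (sym_residual y (fst P), (y - snd P) \<union> (snd P - y))"

end

theory Submission
  imports Defs
begin

lemma sym_diff_cancel:
  "(y - a) \<union> (a - y) = (z - a) \<union> (a - z) \<longleftrightarrow> y = z"
  by blast

theorem mainTheorem4:
  fixes E :: "'e set" and X :: "'e set set" and xd y z :: "'e set"
  assumes "countable E"
    and "conf_struct (E, X)"
    and "rooted (E, X)"
    and "xd \<in> X" and "finite xd"
    and "y \<in> X" and "finite y"
    and "z \<in> X" and "finite z"
  shows "sym_residual_pointed y ((E, X), xd) = sym_residual_pointed z ((E, X), xd) \<longleftrightarrow> y = z"
proof
  assume "sym_residual_pointed y ((E, X), xd) = sym_residual_pointed z ((E, X), xd)"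
  \<comment> \<open>The referential y \<triangle> xd alone determines y.\<close>
  then have "(y - xd) \<union> (xd - y) = (z - xd) \<union> (xd - z)"
    by (simp add: sym_residual_pointed_def)
  then show "y = z"
    by (simp only: sym_diff_cancel)
qed simp

end
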